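(* Let $i,h,g,f$ be positive integers with $f<g$, $f\le h$, and suppose $g-f<ih$. Let $D$ be the $(i+1)h\times(h+g)$ array whose empty cells are exactly those in rows $[ih+1,(i+1)h]$ and columns $[h+g-f+1,h+g]$, and let $D'$ be the $ih\times(h+g)$ array whose empty cells are exactly those in rows $[ih-(g-f)+1,ih]$ and columns $[1,h]$. Then the bishop is a solution to $T(D)$ if and only if it is a solution to $T(D')$.
   Context: Arrays are partially filled and toroidal; $F(B)$ is the set of filled cells. $s_R(i,j)=(i,j+t)$, $s_C(i,j)=(i+t,j)$ with $t\ge1$ minimal such that the cell is filled. The bishop's move is $s_C\circ s_R$. A move function is a solution to $T(B)$ if it is a permutation of $F(B)$ forming a single cycle of length $|F(B)|$. *)

theory Defs
  imports Main
begin

(* Arrays: m x n toroidal grid, rows 1..m, columns 1..n (1-indexed as in the paper);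
   an array is given by its set of filled cells F. *)

definition cyc :: "nat \<Rightarrow> nat \<Rightarrow> nat \<Rightarrow> nat" where
  "cyc n j t = (j - 1 + t) mod n + 1"

definition grid :: "nat \<Rightarrow> nat \<Rightarrow> (nat \<times> nat) set" where
  "grid m n = {1..m} \<times> {1..n}"

definition sR :: "nat \<Rightarrow> nat \<Rightarrow> (nat \<times> nat) set \<Rightarrow> nat \<times> nat \<Rightarrow> nat \<times> nat" where
  "sR m n F p = (case p of (i, j) \<Rightarrow>
     (i, cyc n j (LEAST t. t \<ge> 1 \<and> (i, cyc n j t) \<in> F)))"

definition sC :: "nat \<Rightarrow> nat \<Rightarrow> (nat \<times> nat) set \<Rightarrow> nat \<times> nat \<Rightarrow> nat \<times> nat" where
  "sC m n F p = (case p of (i, j) \<Rightarrow>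
     (cyc m i (LEAST t. t \<ge> 1 \<and> (cyc m i t, j) \<in> F), j))"

definition bishop :: "nat \<Rightarrow> nat \<Rightarrow> (nat \<times> nat) set \<Rightarrow> nat \<times> nat \<Rightarrow> nat \<times> nat" where
  "bishop m n F = sC m n F \<circ> sR m n F"

definition solves :: "(nat \<times> nat \<Rightarrow> nat \<times> nat) \<Rightarrow> (nat \<times> nat) set \<Rightarrow> bool" where
  "solves mv F \<longleftrightarrow> bij_betw mv F F \<and> (\<forall>x\<in>F. \<forall>y\<in>F. \<exists>k. (mv ^^ k) x = y)"

end

theory Submission
  imports Defs
begin

(* Both arrays consist of a block of full rows (i h of them in D, i h - (g - f) in D') above a
   few rows (h, resp. g - f) that are filled only in a window of consecutive columns
   (1..h+g-f, resp. h+1..h+g). Every bishop move goes down one row or back to row 1, so every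
   orbit passes through row 1, and the bishop is a single cycle iff its first-return map to row 1 is.
   Started at (1, c), the bishop crosses the full rows diagonally and then, if it lands in the
   window, crosses the window rows diagonally with wrap-around inside the window. So the return
   map on columns is a rotation of all columns followed by a rotation of the window, and for D
   and D' these two composites coincide. *)

section \<open>Orbits and first returns\<close>

definition single_orbit :: "('a \<Rightarrow> 'a) \<Rightarrow> 'a set \<Rightarrow> bool" where
  "single_orbit f A \<longleftrightarrow> (\<forall>x\<in>A. \<forall>y\<in>A. \<exists>k. (f ^^ k) x = y)"

lemma funpow_mem: "(\<And>x. x \<in> A \<Longrightarrow> f x \<in> A) \<Longrightarrow> x \<in> A \<Longrightarrow> (f ^^ k) x \<in> A"
  by (induction k) auto

lemma solves_iff_single_orbit:
  assumes "finite A" and maps: "\<And>x. x \<in> A \<Longrightarrow> f x \<in> A"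
  shows "solves f A \<longleftrightarrow> single_orbit f A"
proof
  assume "solves f A"
  then show "single_orbit f A" by (simp add: solves_def single_orbit_def)
next
  assume orbit: "single_orbit f A"
  have "A \<subseteq> f ` A"
  proof
    fix y assume y: "y \<in> A"
    with orbit maps obtain k where "(f ^^ k) (f y) = y"
      unfolding single_orbit_def by blast
    then have "f ((f ^^ k) y) = y" by (simp add: funpow_swap1)
    moreover have "(f ^^ k) y \<in> A" using funpow_mem maps y by metis
    ultimately show "y \<in> f ` A" by (metis image_eqI)
  qed
  with maps have "f ` A = A" by blast
  with \<open>finite A\<close> have "bij_betw f A A" by (simp add: bij_betw_def eq_card_imp_inj_on)
  with orbit show "solves f A" by (simp add: solves_def single_orbit_def)
qed

lemma single_orbit_cong:
  assumes maps: "\<And>x. x \<in> A \<Longrightarrow> f x \<in> A" and eq: "\<And>x. x \<in> A \<Longrightarrow> f x = g x"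
  shows "single_orbit f A \<longleftrightarrow> single_orbit g A"
proof -
  have "(f ^^ k) x = (g ^^ k) x" if "x \<in> A" for k x
  proof (induction k)
    case (Suc k)
    have "(f ^^ k) x \<in> A" using maps \<open>x \<in> A\<close> by (rule funpow_mem)
    then have "(f ^^ Suc k) x = g ((f ^^ k) x)" by (simp add: eq)
    with Suc.IH show ?case by simp
  qed simp
  then show ?thesis by (simp add: single_orbit_def)
qed

lemma return_power_of_funpow:
  assumes return: "\<And>s. s \<in> S \<Longrightarrow>
      \<exists>t\<ge>1. (f ^^ t) s = R s \<and> (\<forall>j. 0 < j \<and> j < t \<longrightarrow> (f ^^ j) s \<notin> S)"
    and return_mem: "\<And>s. s \<in> S \<Longrightarrow> R s \<in> S"
  shows "s \<in> S \<Longrightarrow> s' \<in> S \<Longrightarrow> (f ^^ k) s = s' \<Longrightarrow> \<exists>j. (R ^^ j) s = s'"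
\<comment> \<open>an \<open>f\<close>-path between two points of \<open>S\<close> splits at its visits to \<open>S\<close> into \<open>R\<close>-steps\<close>
proof (induction k arbitrary: s rule: less_induct)
  case (less k)
  show ?case
  proof (cases "k = 0")
    case True
    with less.prems show ?thesis by (metis funpow_0)
  next
    case False
    obtain t where t: "1 \<le> t" "(f ^^ t) s = R s" "\<forall>j. 0 < j \<and> j < t \<longrightarrow> (f ^^ j) s \<notin> S"
      using return less.prems(1) by blast
    have "t \<le> k"
      using t(3) False less.prems(2,3) by (metis bot_nat_0.not_eq_extremum not_le)
    then have "(f ^^ (k - t)) (R s) = s'"
      using less.prems(3) t(2) by (metis comp_apply funpow_add le_add_diff_inverse2)
    moreover have "k - t < k" using t(1) False by simp
    ultimately obtain j where "(R ^^ j) (R s) = s'"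
      using less.IH return_mem less.prems by blast
    then show ?thesis by (metis comp_apply funpow_Suc_right)
  qed
qed

lemma funpow_of_return_power:
  assumes return: "\<And>s. s \<in> S \<Longrightarrow> \<exists>t. (f ^^ t) s = R s"
    and return_mem: "\<And>s. s \<in> S \<Longrightarrow> R s \<in> S"
  shows "s \<in> S \<Longrightarrow> \<exists>k. (f ^^ k) s = (R ^^ j) s"
proof (induction j arbitrary: s)
  case 0
  show ?case by (metis funpow_0)
next
  case (Suc j)
  obtain t where "(f ^^ t) s = R s" using return Suc.prems by blast
  moreover obtain k where "(f ^^ k) (R s) = (R ^^ j) (R s)"
    using Suc.IH return_mem Suc.prems by blast
  ultimately have "(f ^^ (k + t)) s = (R ^^ Suc j) s"
    by (simp add: funpow_add funpow_swap1)
  then show ?case by blast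
qed

lemma single_orbit_iff_first_return:
  assumes "S \<subseteq> A"
    and return: "\<And>s. s \<in> S \<Longrightarrow>
      \<exists>t\<ge>1. (f ^^ t) s = R s \<and> (\<forall>j. 0 < j \<and> j < t \<longrightarrow> (f ^^ j) s \<notin> S)"
    and return_mem: "\<And>s. s \<in> S \<Longrightarrow> R s \<in> S"
    and reaches: "\<And>x. x \<in> A \<Longrightarrow> \<exists>k. (f ^^ k) x \<in> S"
    and reached: "\<And>y. y \<in> A \<Longrightarrow> \<exists>s\<in>S. \<exists>k. (f ^^ k) s = y"
  shows "single_orbit f A \<longleftrightarrow> single_orbit R S"
proof
  assume "single_orbit f A"
  with \<open>S \<subseteq> A\<close> return_power_of_funpow[OF return return_mem] show "single_orbit R S"
    unfolding single_orbit_def by blast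
next
  assume orbit: "single_orbit R S"
  have along_R: "\<exists>k. (f ^^ k) s = (R ^^ j) s" if "s \<in> S" for j s
    using funpow_of_return_power[of S f R] return return_mem that by blast
  show "single_orbit f A" unfolding single_orbit_def
  proof (intro ballI)
    fix x y assume "x \<in> A" "y \<in> A"
    obtain a where a: "(f ^^ a) x \<in> S" using reaches \<open>x \<in> A\<close> by blast
    obtain s b where s: "s \<in> S" "(f ^^ b) s = y" using reached \<open>y \<in> A\<close> by blast
    obtain j where "(R ^^ j) ((f ^^ a) x) = s" using orbit a s(1) unfolding single_orbit_def by blast
    then obtain c where "(f ^^ c) ((f ^^ a) x) = s" using along_R[OF a] by metis
    then have "(f ^^ (b + c + a)) x = y" using s(2) by (simp add: funpow_add)
    then show "\<exists>k. (f ^^ k) x = y" by blast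
  qed
qed

lemma funpow_reaches_level_one:
  fixes lvl :: "'a \<Rightarrow> nat"
  assumes maps: "\<And>x. x \<in> A \<Longrightarrow> f x \<in> A" and bounded: "\<And>x. x \<in> A \<Longrightarrow> lvl x \<le> m"
    and step: "\<And>x. x \<in> A \<Longrightarrow> lvl (f x) = 1 \<or> lvl (f x) = Suc (lvl x)"
    and "x \<in> A"
  shows "\<exists>k. lvl ((f ^^ k) x) = 1"
  using \<open>x \<in> A\<close>
proof (induction "m - lvl x" arbitrary: x rule: less_induct)
  case less
  show ?case
  proof (cases "lvl (f x) = 1")
    case True
    then have "lvl ((f ^^ 1) x) = 1" by simp
    then show ?thesis by blast
  next
    case False
    with step less.prems have "lvl (f x) = Suc (lvl x)" by blast
    moreover have "f x \<in> A" using maps less.prems by blast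
    ultimately have "m - lvl (f x) < m - lvl x" using bounded by fastforce
    then obtain k where "lvl ((f ^^ k) (f x)) = 1" using less.hyps \<open>f x \<in> A\<close> by blast
    then show ?thesis by (metis comp_apply funpow_Suc_right)
  qed
qed

lemma reachable_from_level_one:
  fixes lvl :: "'a \<Rightarrow> nat"
  assumes pred: "\<And>y. y \<in> A \<Longrightarrow> lvl y \<noteq> 1 \<Longrightarrow> \<exists>x\<in>A. f x = y \<and> lvl x < lvl y"
    and "y \<in> A"
  shows "\<exists>s\<in>A. lvl s = 1 \<and> (\<exists>k. (f ^^ k) s = y)"
  using \<open>y \<in> A\<close>
proof (induction "lvl y" arbitrary: y rule: less_induct)
  case less
  show ?case
  proof (cases "lvl y = 1")
    case True
    with less.prems show ?thesis by (metis funpow_0)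
  next
    case False
    then obtain x where x: "x \<in> A" "f x = y" "lvl x < lvl y" using pred less.prems by blast
    then obtain s k where "s \<in> A" "lvl s = 1" "(f ^^ k) s = x" using less.hyps by blast
    with x(2) show ?thesis by (metis comp_apply funpow.simps(2))
  qed
qed

section \<open>Cyclic successors and the moves \<open>sR\<close>, \<open>sC\<close>\<close>

lemma cyc_bounds: "0 < n \<Longrightarrow> 1 \<le> cyc n j t \<and> cyc n j t \<le> n"
  by (simp add: cyc_def Suc_leI)

lemma cyc_cyc: "0 < n \<Longrightarrow> cyc n (cyc n j s) t = cyc n j (s + t)"
  by (simp add: cyc_def mod_add_left_eq add.assoc)

lemma cyc_0: "1 \<le> j \<Longrightarrow> j \<le> n \<Longrightarrow> cyc n j 0 = j"
  by (simp add: cyc_def)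

lemma cyc_no_wrap: "1 \<le> j \<Longrightarrow> j + t \<le> n \<Longrightarrow> cyc n j t = j + t"
  by (simp add: cyc_def)

lemma cyc_wrap: "1 \<le> j \<Longrightarrow> j + t = n + 1 \<Longrightarrow> cyc n j t = 1"
  by (simp add: cyc_def)

lemma cyc_1: "1 \<le> j \<Longrightarrow> j \<le> n \<Longrightarrow> cyc n j 1 = (if j < n then j + 1 else 1)"
  by (auto simp: cyc_def)

lemma cyc_pred:
  assumes "1 \<le> j" "j \<le> n"
  shows "cyc n (cyc n j (n - 1)) 1 = j"
proof -
  have "cyc n (cyc n j (n - 1)) 1 = cyc n j n"
    using assms cyc_cyc[of n j "n - 1" 1] by simp
  also have "\<dots> = j"
    unfolding cyc_def by (simp only: mod_add_self2) (use assms in simp)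
  finally show ?thesis .
qed

lemma cyc_past_window_end:
  assumes "lo + w \<le> n" "0 < w" "1 \<le> t" "t \<le> n - w"
  shows "cyc n (lo + w) t \<le> lo \<or> lo + w < cyc n (lo + w) t"
proof (cases "lo + w - 1 + t < n")
  case True
  then show ?thesis using assms by (simp add: cyc_def)
next
  case False
  then have "(lo + w - 1 + t) mod n = lo + w - 1 + t - n"
    using assms by (simp add: le_mod_geq)
  then have "cyc n (lo + w) t = lo + w + t - n"
    using assms False by (simp add: cyc_def)
  then show ?thesis using assms by linarith
qed

lemma cyc_window_end: "lo + w \<le> n \<Longrightarrow> 0 < w \<Longrightarrow> cyc n (lo + w) (n - w + 1) = lo + 1"
  by (simp add: cyc_def)

lemma sR_eqI:
  assumes "1 \<le> t" "(i, cyc n j t) \<in> F" "\<And>t'. 1 \<le> t' \<Longrightarrow> t' < t \<Longrightarrow> (i, cyc n j t') \<notin> F"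
  shows "sR m n F (i, j) = (i, cyc n j t)"
proof -
  have "(LEAST t. t \<ge> 1 \<and> (i, cyc n j t) \<in> F) = t"
    by (rule Least_equality) (use assms not_less in blast)+
  then show ?thesis by (simp add: sR_def)
qed

lemma sC_eqI:
  assumes "1 \<le> t" "(cyc m i t, j) \<in> F" "\<And>t'. 1 \<le> t' \<Longrightarrow> t' < t \<Longrightarrow> (cyc m i t', j) \<notin> F"
  shows "sC m n F (i, j) = (cyc m i t, j)"
proof -
  have "(LEAST t. t \<ge> 1 \<and> (cyc m i t, j) \<in> F) = t"
    by (rule Least_equality) (use assms not_less in blast)+
  then show ?thesis by (simp add: sC_def)
qed

lemma sR_next_filled: "(i, cyc n j 1) \<in> F \<Longrightarrow> sR m n F (i, j) = (i, cyc n j 1)"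
  by (rule sR_eqI) auto

lemma sC_next_filled: "(cyc m i 1, j) \<in> F \<Longrightarrow> sC m n F (i, j) = (cyc m i 1, j)"
  by (rule sC_eqI) auto

section \<open>The bishop on an array with a windowed bottom block\<close>

definition window_array :: "nat \<Rightarrow> nat \<Rightarrow> nat \<Rightarrow> nat \<Rightarrow> nat \<Rightarrow> (nat \<times> nat) set" where
  "window_array n a b lo w = {1..a} \<times> {1..n} \<union> {a+1..a+b} \<times> {lo+1..lo+w}"

definition window_return :: "nat \<Rightarrow> nat \<Rightarrow> nat \<Rightarrow> nat \<Rightarrow> nat \<Rightarrow> nat \<Rightarrow> nat" where
  "window_return n a b lo w c =
     (let c' = cyc n c a in if lo < c' \<and> c' \<le> lo + w then lo + cyc w (c' - lo) b else c')"

lemma window_return_inside: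
  "lo < cyc n c a \<Longrightarrow> cyc n c a \<le> lo + w \<Longrightarrow>
    window_return n a b lo w c = lo + cyc w (cyc n c a - lo) b"
  by (simp add: window_return_def)

lemma window_return_outside:
  "cyc n c a \<le> lo \<or> lo + w < cyc n c a \<Longrightarrow> window_return n a b lo w c = cyc n c a"
  by (auto simp: window_return_def)

lemma window_return_bounds:
  assumes "0 < w" "lo + w \<le> n"
  shows "1 \<le> window_return n a b lo w c \<and> window_return n a b lo w c \<le> n"
proof -
  let ?c = "cyc n c a"
  have "1 \<le> ?c" "?c \<le> n" "1 \<le> cyc w (?c - lo) b" "cyc w (?c - lo) b \<le> w"
    using assms cyc_bounds[of n] cyc_bounds[of w] by auto
  then show ?thesis using assms by (auto simp: window_return_def Let_def)
qed

locale window_array_shape =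
  fixes n a b lo w :: nat
  assumes a_pos: "0 < a" and b_pos: "0 < b" and w_pos: "0 < w" and window_fits: "lo + w \<le> n"
begin

abbreviation "cells \<equiv> window_array n a b lo w"
abbreviation "move \<equiv> bishop (a + b) n cells"

lemma n_pos: "0 < n"
  using w_pos window_fits by simp

lemma mem_cells [simp]:
  "(r, c) \<in> cells \<longleftrightarrow>
    1 \<le> r \<and> r \<le> a + b \<and> 1 \<le> c \<and> c \<le> n \<and> (r \<le> a \<or> lo < c \<and> c \<le> lo + w)"
  using window_fits by (auto simp: window_array_def)

lemma sR_window_row:
  assumes "a < r" "r \<le> a + b" "lo < c" "c \<le> lo + w"
  shows "sR (a + b) n cells (r, c) = (r, lo + cyc w (c - lo) 1)"
proof (cases "c < lo + w")
  case True
  then have "cyc n c 1 = c + 1" "cyc w (c - lo) 1 = c - lo + 1"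
    using assms window_fits by (simp_all add: cyc_no_wrap)
  then show ?thesis using assms True window_fits by (simp add: sR_next_filled)
next
  case False
  then have c: "c = lo + w" using assms by simp
  have "sR (a + b) n cells (r, lo + w) = (r, cyc n (lo + w) (n - w + 1))"
  proof (rule sR_eqI)
    fix t' assume "1 \<le> t'" "t' < n - w + 1"
    then show "(r, cyc n (lo + w) t') \<notin> cells"
      using assms(1) cyc_past_window_end[OF window_fits w_pos, of t'] by auto
  qed (use assms w_pos window_fits cyc_window_end in auto)
  then show ?thesis using c w_pos window_fits by (simp add: cyc_window_end cyc_def)
qed

lemma bishop_full_row:
  assumes "1 \<le> r" "r < a" "1 \<le> c" "c \<le> n"
  shows "move (r, c) = (r + 1, cyc n c 1)"
proof -
  have "sR (a + b) n cells (r, c) = (r, cyc n c 1)"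
    using assms cyc_bounds[OF n_pos] by (simp add: sR_next_filled)
  moreover have "cyc (a + b) r 1 = r + 1" using assms by (simp add: cyc_no_wrap)
  moreover have "sC (a + b) n cells (r, cyc n c 1) = (r + 1, cyc n c 1)"
    using assms cyc_bounds[OF n_pos] calculation(2) by (simp add: sC_next_filled)
  ultimately show ?thesis by (simp add: bishop_def)
qed

lemma bishop_last_full_row:
  assumes "1 \<le> c" "c \<le> n"
  shows "move (a, c) = (if lo < cyc n c 1 \<and> cyc n c 1 \<le> lo + w then a + 1 else 1, cyc n c 1)"
proof -
  let ?c = "cyc n c 1"
  have c: "1 \<le> ?c" "?c \<le> n" using cyc_bounds[OF n_pos] by auto
  have row: "sR (a + b) n cells (a, c) = (a, ?c)"
    using assms a_pos c by (simp add: sR_next_filled)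
  show ?thesis
  proof (cases "lo < ?c \<and> ?c \<le> lo + w")
    case True
    have "cyc (a + b) a 1 = a + 1" using a_pos b_pos by (simp add: cyc_no_wrap)
    then have "sC (a + b) n cells (a, ?c) = (a + 1, ?c)"
      using True c b_pos by (simp add: sC_next_filled)
    with row True show ?thesis by (simp add: bishop_def)
  next
    case False
    have "sC (a + b) n cells (a, ?c) = (cyc (a + b) a (b + 1), ?c)"
      by (rule sC_eqI) (use False c a_pos cyc_wrap[of a "b + 1" "a + b"] cyc_no_wrap[of a _ "a + b"] in auto)
    with row False a_pos show ?thesis by (simp add: bishop_def cyc_wrap)
  qed
qed

lemma bishop_window_row:
  assumes "a < r" "r \<le> a + b" "lo < c" "c \<le> lo + w"
  shows "move (r, c) = (cyc (a + b) r 1, lo + cyc w (c - lo) 1)"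
proof -
  let ?c = "lo + cyc w (c - lo) 1"
  have "lo < ?c" "?c \<le> lo + w" using cyc_bounds[OF w_pos, of "c - lo" 1] by auto
  moreover have "a < cyc (a + b) r 1 \<and> cyc (a + b) r 1 \<le> a + b \<or> cyc (a + b) r 1 = 1"
    using assms cyc_no_wrap[of r 1 "a + b"] cyc_wrap[of r 1 "a + b"] by linarith
  ultimately have "sC (a + b) n cells (r, ?c) = (cyc (a + b) r 1, ?c)"
    using assms window_fits a_pos by (intro sC_next_filled) auto
  then show ?thesis using sR_window_row[OF assms] by (simp add: bishop_def)
qed

lemma bishop_step:
  assumes "x \<in> cells"
  shows "move x \<in> cells \<and> (fst (move x) = 1 \<or> fst (move x) = Suc (fst x))"
proof -
  obtain r c where x: "x = (r, c)" by fastforce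
  have c: "1 \<le> cyc n c 1" "cyc n c 1 \<le> n" using cyc_bounds[OF n_pos] by auto
  consider "r < a" | "r = a" | "a < r" by linarith
  then show ?thesis
  proof cases
    case 1
    then show ?thesis using assms x c bishop_full_row[of r c] by auto
  next
    case 2
    then show ?thesis using assms x c a_pos b_pos bishop_last_full_row[of c] by auto
  next
    case 3
    have "1 \<le> cyc w (c - lo) 1" "cyc w (c - lo) 1 \<le> w" using cyc_bounds[OF w_pos] by auto
    then show ?thesis using assms x 3 a_pos window_fits bishop_window_row[of r c] cyc_1[of r "a + b"]
      by auto
  qed
qed

lemma bishop_row_predecessor:
  assumes "y \<in> cells" "fst y \<noteq> 1"
  shows "\<exists>x\<in>cells. move x = y \<and> fst x < fst y"
proof -
  obtain r c where y: "y = (r, c)" by fastforce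
  let ?c = "cyc n c (n - 1)"
  have r: "2 \<le> r" "r \<le> a + b" and c: "1 \<le> c" "c \<le> n" using assms y by auto
  have "1 \<le> ?c" "?c \<le> n" "cyc n ?c 1 = c" using cyc_bounds[OF n_pos] cyc_pred[OF c] by auto
  consider "r \<le> a" | "r = a + 1" | "a + 1 < r" by linarith
  then show ?thesis
  proof cases
    case 1
    then have "move (r - 1, ?c) = (r, c)" using r \<open>1 \<le> ?c\<close> \<open>?c \<le> n\<close> \<open>cyc n ?c 1 = c\<close>
      by (simp add: bishop_full_row)
    then show ?thesis unfolding y using 1 r \<open>1 \<le> ?c\<close> \<open>?c \<le> n\<close>
      by (intro bexI[of _ "(r - 1, ?c)"]) auto
  next
    case 2
    then have "move (a, ?c) = (r, c)" using assms y \<open>1 \<le> ?c\<close> \<open>?c \<le> n\<close> \<open>cyc n ?c 1 = c\<close>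
      by (simp add: bishop_last_full_row)
    then show ?thesis unfolding y using 2 a_pos \<open>1 \<le> ?c\<close> \<open>?c \<le> n\<close>
      by (intro bexI[of _ "(a, ?c)"]) auto
  next
    case 3
    let ?e = "cyc w (c - lo) (w - 1)"
    have window: "lo < c" "c \<le> lo + w" using assms y 3 by auto
    have e: "1 \<le> ?e" "?e \<le> w" "cyc w ?e 1 = c - lo"
      using cyc_bounds[OF w_pos] cyc_pred[of "c - lo" w] window by auto
    moreover have "cyc (a + b) (r - 1) 1 = r" using 3 r by (simp add: cyc_no_wrap)
    ultimately have "move (r - 1, lo + ?e) = (r, c)"
      using 3 r window bishop_window_row[of "r - 1" "lo + ?e"] by simp
    then show ?thesis unfolding y using 3 r window_fits e
      by (intro bexI[of _ "(r - 1, lo + ?e)"]) auto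
  qed
qed

lemma funpow_move_full_rows:
  assumes "1 \<le> c" "c \<le> n"
  shows "k < a \<Longrightarrow> (move ^^ k) (1, c) = (k + 1, cyc n c k)"
proof (induction k)
  case 0
  show ?case using assms by (simp add: cyc_0)
next
  case (Suc k)
  then have "(move ^^ Suc k) (1, c) = move (k + 1, cyc n c k)" by simp
  also have "\<dots> = (Suc k + 1, cyc n c (Suc k))"
    using Suc.prems cyc_bounds[OF n_pos, of c k] cyc_cyc[OF n_pos, of c k 1]
    by (simp add: bishop_full_row)
  finally show ?case .
qed

lemma funpow_move_leave_full_rows:
  assumes "1 \<le> c" "c \<le> n"
  shows "(move ^^ a) (1, c) =
    (if lo < cyc n c a \<and> cyc n c a \<le> lo + w then a + 1 else 1, cyc n c a)"
proof -
  have "a = Suc (a - 1)" using a_pos by simp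
  then have "(move ^^ a) (1, c) = move ((move ^^ (a - 1)) (1, c))"
    by (metis comp_apply funpow.simps(2))
  also have "\<dots> = move (a, cyc n c (a - 1))"
    using funpow_move_full_rows[OF assms, of "a - 1"] a_pos by simp
  also have "\<dots> = (if lo < cyc n c a \<and> cyc n c a \<le> lo + w then a + 1 else 1, cyc n c a)"
    using bishop_last_full_row[of "cyc n c (a - 1)"] cyc_bounds[OF n_pos, of c "a - 1"]
      cyc_cyc[OF n_pos, of c "a - 1" 1] a_pos by simp
  finally show ?thesis .
qed

lemma funpow_move_window_rows:
  assumes "lo < c" "c \<le> lo + w"
  shows "j \<le> b \<Longrightarrow> (move ^^ j) (a + 1, c) = (cyc (a + b) (a + 1) j, lo + cyc w (c - lo) j)"
proof (induction j)
  case 0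
  show ?case using assms b_pos by (simp add: cyc_0)
next
  case (Suc j)
  have row: "cyc (a + b) (a + 1) j = a + 1 + j" using Suc.prems by (simp add: cyc_no_wrap)
  have "1 \<le> cyc w (c - lo) j" "cyc w (c - lo) j \<le> w" using cyc_bounds[OF w_pos] by auto
  then have "(move ^^ Suc j) (a + 1, c) = (cyc (a + b) (a + 1 + j) 1, lo + cyc w (c - lo) (Suc j))"
    using Suc row bishop_window_row[of "a + 1 + j" "lo + cyc w (c - lo) j"]
      cyc_cyc[OF w_pos, of "c - lo" j 1] by simp
  also have "cyc (a + b) (a + 1 + j) 1 = cyc (a + b) (a + 1) (Suc j)"
    using row cyc_cyc[of "a + b" "a + 1" j 1] a_pos by simp
  finally show ?case .
qed

lemma move_returns_to_row_one:
  assumes "1 \<le> c" "c \<le> n"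
  shows "\<exists>t\<ge>1. (move ^^ t) (1, c) = (1, window_return n a b lo w c) \<and>
    (\<forall>j. 0 < j \<and> j < t \<longrightarrow> fst ((move ^^ j) (1, c)) \<noteq> 1)"
proof -
  let ?c = "cyc n c a"
  have full_rows: "fst ((move ^^ j) (1, c)) \<noteq> 1" if "0 < j" "j < a" for j
    using funpow_move_full_rows[OF assms that(2)] that(1) by simp
  show ?thesis
  proof (cases "lo < ?c \<and> ?c \<le> lo + w")
    case False
    then have "window_return n a b lo w c = ?c" by (intro window_return_outside) auto
    moreover have "(move ^^ a) (1, c) = (1, ?c)"
      using funpow_move_leave_full_rows[OF assms] by (simp only: False if_False)
    ultimately have "(move ^^ a) (1, c) = (1, window_return n a b lo w c)" by simp
    then show ?thesis using full_rows a_pos by (intro exI[of _ a]) auto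
  next
    case True
    have window: "(move ^^ (j + a)) (1, c) = (cyc (a + b) (a + 1) j, lo + cyc w (?c - lo) j)"
      if "j \<le> b" for j
      using funpow_move_leave_full_rows[OF assms] funpow_move_window_rows[of ?c j] True that
      by (simp add: funpow_add)
    have "cyc (a + b) (a + 1) b = 1" by (simp add: cyc_wrap)
    then have "(move ^^ (b + a)) (1, c) = (1, window_return n a b lo w c)"
      using window[of b] True by (simp add: window_return_inside)
    moreover have "fst ((move ^^ j) (1, c)) \<noteq> 1" if "0 < j" "j < b + a" for j
    proof (cases "j < a")
      case True
      then show ?thesis using full_rows that by blast
    next
      case False
      then show ?thesis
        using window[of "j - a"] that a_pos cyc_no_wrap[of "a + 1" "j - a" "a + b"] by simp
    qed
    ultimately show ?thesis using a_pos by (intro exI[of _ "b + a"]) auto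
  qed
qed

lemma row_one_mem: "x \<in> cells \<Longrightarrow> fst x = 1 \<Longrightarrow> x \<in> {1::nat} \<times> {1..n}"
  by (cases x) auto

lemma funpow_move_reaches_row_one:
  assumes "x \<in> cells"
  shows "\<exists>k. (move ^^ k) x \<in> {1::nat} \<times> {1..n}"
proof -
  have maps: "\<And>x. x \<in> cells \<Longrightarrow> move x \<in> cells"
    and step: "\<And>x. x \<in> cells \<Longrightarrow> fst (move x) = 1 \<or> fst (move x) = Suc (fst x)"
    using bishop_step by blast+
  have bounded: "fst x \<le> a + b" if "x \<in> cells" for x using that by (cases x) auto
  obtain k where "fst ((move ^^ k) x) = 1"
    using funpow_reaches_level_one[of cells move fst, OF maps bounded step assms] by blast
  moreover have "(move ^^ k) x \<in> cells" using maps assms by (rule funpow_mem)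
  ultimately show ?thesis using row_one_mem by blast
qed

lemma funpow_move_from_row_one:
  assumes "y \<in> cells"
  shows "\<exists>s\<in>{1::nat} \<times> {1..n}. \<exists>k. (move ^^ k) s = y"
proof -
  obtain s k where "s \<in> cells" "fst s = 1" "(move ^^ k) s = y"
    using reachable_from_level_one[OF bishop_row_predecessor assms] by blast
  then show ?thesis using row_one_mem by blast
qed

theorem solves_bishop_iff_single_orbit_return:
  "solves move cells \<longleftrightarrow>
    single_orbit (\<lambda>x. (1, window_return n a b lo w (snd x))) ({1::nat} \<times> {1..n})"
proof -
  let ?R = "\<lambda>x::nat \<times> nat. (1::nat, window_return n a b lo w (snd x))"
  let ?S = "{1::nat} \<times> {1..n}"
  have "finite cells" by (simp add: window_array_def)
  then have "solves move cells \<longleftrightarrow> single_orbit move cells"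
    using bishop_step by (intro solves_iff_single_orbit) blast+
  also have "\<dots> \<longleftrightarrow> single_orbit ?R ?S"
  proof (rule single_orbit_iff_first_return)
    show "?S \<subseteq> cells" using a_pos by auto
    show "\<exists>t\<ge>1. (move ^^ t) s = ?R s \<and> (\<forall>j. 0 < j \<and> j < t \<longrightarrow> (move ^^ j) s \<notin> ?S)"
      if s: "s \<in> ?S" for s
    proof -
      obtain c where c: "s = (1, c)" "1 \<le> c" "c \<le> n" using s by (cases s) auto
      have "\<exists>t\<ge>1. (move ^^ t) s = ?R s \<and> (\<forall>j. 0 < j \<and> j < t \<longrightarrow> fst ((move ^^ j) s) \<noteq> 1)"
        using move_returns_to_row_one[OF c(2,3)] unfolding c(1) by simp
      then show ?thesis by (auto simp: mem_Times_iff)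
    qed
    show "?R s \<in> ?S" for s using window_return_bounds[OF w_pos window_fits] by auto
  qed (use funpow_move_reaches_row_one funpow_move_from_row_one in blast)+
  finally show ?thesis .
qed

end

lemma window_return_left_eq_right:
  assumes "d \<le> g" "0 < g" "1 \<le> c" "c \<le> h + g"
  shows "window_return (h + g) (a + d) h 0 (h + d) c = window_return (h + g) a d h g c"
proof -
  let ?n = "h + g"
  define y where "y = (c - 1 + (a + d)) mod ?n"
  have "y < ?n" using assms by (simp add: y_def)
  have "(c - 1 + a + d) + (?n - d) = (c - 1 + a) + ?n" using assms by simp
  then have "(c - 1 + a) mod ?n = ((c - 1 + a + d) + (?n - d)) mod ?n" by (metis mod_add_self2)
  then have shifted: "cyc ?n c a = (y + (?n - d)) mod ?n + 1"
    by (simp add: cyc_def y_def mod_add_left_eq add.assoc)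
  have unshifted: "cyc ?n c (a + d) = y + 1" by (simp add: cyc_def y_def)
  consider "h + d \<le> y" | "y < d" | "d \<le> y" "y < h + d" by linarith
  then show ?thesis
  proof cases
    case 1
    have "window_return ?n (a + d) h 0 (h + d) c = y + 1"
      using 1 unshifted by (simp add: window_return_outside)
    moreover have "cyc ?n c a = y - d + 1"
      using shifted \<open>y < ?n\<close> 1 assms by (simp add: le_mod_geq)
    then have "window_return ?n a d h g c = h + cyc g (y - d + 1 - h) d"
      using 1 \<open>y < ?n\<close> by (simp add: window_return_inside)
    moreover have "cyc g (y - d + 1 - h) d = y - h + 1"
      using 1 \<open>y < ?n\<close> by (simp add: cyc_def)
    ultimately show ?thesis using 1 by simp
  next
    case 2
    have "cyc (h + d) (y + 1) h = y + h + 1"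
      using 2 by (simp add: cyc_def)
    then have "window_return ?n (a + d) h 0 (h + d) c = y + h + 1"
      using 2 unshifted by (simp add: window_return_inside)
    moreover have "window_return ?n a d h g c = h + cyc g (y + 1 + (g - d)) d"
    proof -
      have a: "cyc ?n c a = h + (y + 1 + (g - d))"
        using shifted \<open>y < ?n\<close> assms 2 by simp
      then have "h < cyc ?n c a" "cyc ?n c a \<le> h + g" using 2 assms by simp_all
      then have "window_return ?n a d h g c = h + cyc g (cyc ?n c a - h) d"
        by (rule window_return_inside)
      also have "cyc ?n c a - h = y + 1 + (g - d)" using a by simp
      finally show ?thesis .
    qed
    moreover have "cyc g (y + 1 + (g - d)) d = y + 1"
      using 2 assms by (simp add: cyc_def)
    ultimately show ?thesis by simp
  next
    case 3
    have "cyc (h + d) (y + 1) h = y - d + 1"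
      using 3 by (simp add: cyc_def le_mod_geq)
    then have "window_return ?n (a + d) h 0 (h + d) c = y - d + 1"
      using 3 unshifted by (simp add: window_return_inside)
    moreover have a: "cyc ?n c a = y - d + 1"
      using shifted \<open>y < ?n\<close> 3 assms by (simp add: le_mod_geq)
    then have "window_return ?n a d h g c = cyc ?n c a"
      using 3 by (intro window_return_outside disjI1) simp
    ultimately show ?thesis using a by simp
  qed
qed

lemma single_orbit_window_return_left_iff_right:
  assumes "d \<le> g" "0 < g"
  shows "single_orbit (\<lambda>x. (1, window_return (h + g) (a + d) h 0 (h + d) (snd x)))
      ({1::nat} \<times> {1..h + g}) \<longleftrightarrow>
    single_orbit (\<lambda>x. (1, window_return (h + g) a d h g (snd x))) ({1::nat} \<times> {1..h + g})"
proof (rule sym, rule single_orbit_cong)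
  show "(1, window_return (h + g) a d h g (snd x)) \<in> {1::nat} \<times> {1..h + g}" for x
    using window_return_bounds[of g h "h + g"] assms by auto
  show "(1, window_return (h + g) a d h g (snd x)) =
    (1::nat, window_return (h + g) (a + d) h 0 (h + d) (snd x))" if "x \<in> {1} \<times> {1..h + g}" for x
  proof -
    have "1 \<le> snd x" "snd x \<le> h + g" using that by (auto simp: mem_Times_iff)
    then show ?thesis using window_return_left_eq_right[of d g "snd x" h a] assms by simp
  qed
qed

theorem lemma4p8:
  fixes i h g f :: nat
  assumes "0 < i" "0 < h" "0 < g" "0 < f" "f < g" "f \<le> h" "g - f < i * h"
  defines "FD \<equiv> grid ((i+1)*h) (h+g) - ({i*h+1..(i+1)*h} \<times> {h+g-f+1..h+g})"
      and "FD' \<equiv> grid (i*h) (h+g) - ({i*h-(g-f)+1..i*h} \<times> {1..h})"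
  shows "solves (bishop ((i+1)*h) (h+g) FD) FD \<longleftrightarrow> solves (bishop (i*h) (h+g) FD') FD'"
proof -
  define d where "d = g - f"
  define L where "L = i * h - d"
  have d: "0 < d" "d \<le> g" "h + g - f = h + d" "g - f = d" and "0 < L"
    using assms(3,5,7) by (auto simp: d_def L_def)
  have rows: "(i + 1) * h = L + d + h" "i * h = L + d"
    using assms(7) by (simp_all add: d_def L_def)
  interpret D: window_array_shape "h + g" "L + d" h 0 "h + d"
    using \<open>0 < L\<close> d assms(2) by unfold_locales auto
  interpret D': window_array_shape "h + g" L d h g
    using \<open>0 < L\<close> d assms(3) by unfold_locales auto
  have FD_eq: "FD = window_array (h + g) (L + d) h 0 (h + d)"
    using d unfolding FD_def rows d(3) by (auto simp: grid_def window_array_def)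
  have FD'_eq: "FD' = window_array (h + g) L d h g"
    unfolding FD'_def rows d(4) by (auto simp: grid_def window_array_def)
  show ?thesis
    unfolding rows FD_eq FD'_eq D.solves_bishop_iff_single_orbit_return
      D'.solves_bishop_iff_single_orbit_return
    by (rule single_orbit_window_return_left_iff_right[OF d(2) assms(3)])
qed

end
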